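(* Let each directed channel of a fully connected network of $n$ processes be timely independently with the same probability $p<1$ (with $p>0$ fixed). In a multi-hop Omega implementation, a leader can exist only if some process has directed paths of timely channels to all other processes. Then the probability of leader existence in any multi-hop Omega implementation, i.e. the probability that there exists a process having a directed path of timely channels to every other process, approaches $1$ exponentially fast as $n\to\infty$.
   Context: A network has $n$ processes and a directed channel from every process to every other process. Each directed channel is timely with probability $p$, independently of all other channels. In a multi-hop implementation of the Omega failure detector, a message may reach its destination by being forwarded through intermediate processes, so a process can be the leader provided it has a timely directed path (a path all of whose channels are timely) to every other process. *)

theory Defs
  imports "HOL-Probability.Probability"
begin

definition channels :: "nat \<Rightarrow> (nat \<times> nat) set" where
  "channels n = {(i, j). i < n \<and> j < n \<and> i \<noteq> j}"

definition timeliness_dist :: "real \<Rightarrow> nat \<Rightarrow> (nat \<times> nat \<Rightarrow> bool) pmf" where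
  "timeliness_dist p n = Pi_pmf (channels n) False (\<lambda>_. bernoulli_pmf p)"

definition timely_channels :: "nat \<Rightarrow> (nat \<times> nat \<Rightarrow> bool) \<Rightarrow> (nat \<times> nat) set" where
  "timely_channels n t = {e \<in> channels n. t e}"

definition leader_exists :: "nat \<Rightarrow> (nat \<times> nat \<Rightarrow> bool) \<Rightarrow> bool" where
  "leader_exists n t \<longleftrightarrow>
     (\<exists>i<n. \<forall>j<n. j \<noteq> i \<longrightarrow> (i, j) \<in> (timely_channels n t)\<^sup>+)"

end

theory Submission
  imports Defs
begin

text \<open>
  Take process 0 as the candidate leader. It can miss a process \<open>j \<noteq> 0\<close> only if none of the
  \<open>n - 2\<close> relays \<open>k\<close> gives a timely two-hop path \<open>0 \<rightarrow> k \<rightarrow> j\<close>; these paths use pairwise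
  disjoint channels, so this has probability \<open>(1 - p\<^sup>2) ^ (n - 2)\<close>. A union bound over \<open>j\<close>
  bounds the failure probability by \<open>(n - 1) (1 - p\<^sup>2) ^ (n - 2)\<close>, which is \<open>O(c ^ n)\<close>
  for \<open>c = sqrt (1 - p\<^sup>2)\<close>.
\<close>

definition depends_only_on :: "('a \<Rightarrow> 'b) set \<Rightarrow> 'a set \<Rightarrow> bool" where
  "depends_only_on E A \<longleftrightarrow> (\<forall>t t'. (\<forall>x\<in>A. t x = t' x) \<longrightarrow> (t \<in> E \<longleftrightarrow> t' \<in> E))"

lemma depends_only_onD:
  "depends_only_on E A \<Longrightarrow> (\<And>x. x \<in> A \<Longrightarrow> t x = t' x) \<Longrightarrow> t \<in> E \<longleftrightarrow> t' \<in> E"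
  unfolding depends_only_on_def by blast

text \<open>Unlike \<open>measure_pmf_prob_product\<close>, no countability is needed: only the supports matter.\<close>
lemma measure_pmf_prob_pair_Times:
  "measure_pmf.prob (pair_pmf M N) (A \<times> B) = measure_pmf.prob M A * measure_pmf.prob N B"
proof -
  have "measure_pmf.prob (pair_pmf M N) (A \<times> B) =
        measure_pmf.prob (pair_pmf M N) ((A \<inter> set_pmf M) \<times> (B \<inter> set_pmf N))"
    by (subst measure_Int_set_pmf[symmetric]) (auto intro: arg_cong[where f = "measure_pmf.prob _"])
  also have "\<dots> = measure_pmf.prob M (A \<inter> set_pmf M) * measure_pmf.prob N (B \<inter> set_pmf N)"
    by (rule measure_pmf_prob_product) auto
  finally show ?thesis by (simp add: measure_Int_set_pmf)
qed

lemma measure_Pi_pmf_subset_event: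
  assumes "finite A" "A' \<subseteq> A" "depends_only_on E A'"
  shows "measure_pmf.prob (Pi_pmf A dflt D) E = measure_pmf.prob (Pi_pmf A' dflt D) E"
proof -
  have "(\<lambda>f x. if x \<in> A' then f x else dflt) f \<in> E \<longleftrightarrow> f \<in> E" for f
    by (rule depends_only_onD[OF assms(3)]) simp
  then have "(\<lambda>f x. if x \<in> A' then f x else dflt) -` E = E" by blast
  then show ?thesis by (simp add: Pi_pmf_subset[OF assms(1,2)])
qed

lemma measure_Pi_pmf_disjoint_blocks:
  assumes "finite K" "\<And>k. k \<in> K \<Longrightarrow> finite (B k)" "disjoint_family_on B K"
    and "\<And>k. k \<in> K \<Longrightarrow> depends_only_on (E k) (B k)"
  shows "measure_pmf.prob (Pi_pmf (\<Union>k\<in>K. B k) dflt D) {t. \<forall>k\<in>K. t \<in> E k} =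
         (\<Prod>k\<in>K. measure_pmf.prob (Pi_pmf (B k) dflt D) (E k))"
  using assms
proof (induction K rule: finite_induct)
  case empty
  then show ?case by simp
next
  case (insert k K)
  let ?merge = "\<lambda>(f, g) x. if x \<in> B k then f x else g x"
  have disj: "B k \<inter> (\<Union>k'\<in>K. B k') = {}"
    using insert.prems(2) insert.hyps(2) by (fastforce simp: disjoint_family_on_def)
  have "?merge -` {t. \<forall>k'\<in>insert k K. t \<in> E k'} = E k \<times> {g. \<forall>k'\<in>K. g \<in> E k'}"
  proof -
    have "?merge (f, g) \<in> E k \<longleftrightarrow> f \<in> E k" for f g
      by (rule depends_only_onD[OF insert.prems(3)]) auto
    moreover have "?merge (f, g) \<in> E k' \<longleftrightarrow> g \<in> E k'" if "k' \<in> K" for f g k'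
      using that disj by (intro depends_only_onD[OF insert.prems(3)]) auto
    ultimately show ?thesis by fastforce
  qed
  moreover have "(\<Union>k'\<in>insert k K. B k') = B k \<union> (\<Union>k'\<in>K. B k')" by simp
  ultimately show ?case
    using insert disj
    by (simp add: Pi_pmf_union measure_pmf_prob_pair_Times disjoint_family_on_insert)
qed

lemma measure_Pi_pmf_bernoulli_not_both:
  assumes "a \<noteq> b" "0 \<le> p" "p \<le> 1"
  shows "measure_pmf.prob (Pi_pmf {a, b} False (\<lambda>_. bernoulli_pmf p)) {t. \<not> (t a \<and> t b)} = 1 - p\<^sup>2"
proof -
  let ?M = "Pi_pmf {a, b} False (\<lambda>_. bernoulli_pmf p)"
  have "{t. t a \<and> t b} = Pi {a, b} (\<lambda>_. {True})" by (auto simp: Pi_def)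
  then have "measure_pmf.prob ?M {t. t a \<and> t b} = p\<^sup>2"
    using assms by (simp add: measure_Pi_pmf_Pi measure_pmf_single power2_eq_square)
  moreover have "{t. \<not> (t a \<and> t b)} = space ?M - {t. t a \<and> t b}" by auto
  ultimately show ?thesis
    using measure_pmf.prob_compl[of "{t. t a \<and> t b}" ?M] by simp
qed

definition no_two_hop_path :: "nat \<Rightarrow> nat \<Rightarrow> (nat \<times> nat \<Rightarrow> bool) set" where
  "no_two_hop_path n j = {t. \<forall>k\<in>{1..<n} - {j}. \<not> (t (0, k) \<and> t (k, j))}"

lemma prob_no_two_hop_path:
  assumes "0 \<le> p" "p \<le> 1" "0 < j" "j < n"
  shows "measure_pmf.prob (timeliness_dist p n) (no_two_hop_path n j) = (1 - p\<^sup>2) ^ (n - 2)"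
proof -
  let ?K = "{1..<n} - {j}"
  let ?B = "\<lambda>k. {(0, k), (k, j)}"
  let ?E = "\<lambda>k. {t. \<not> (t (0, k) \<and> t (k, j))}"
  let ?D = "\<lambda>A. Pi_pmf A False (\<lambda>_. bernoulli_pmf (p::real))"
  have event: "no_two_hop_path n j = {t. \<forall>k\<in>?K. t \<in> ?E k}"
    by (simp add: no_two_hop_path_def)
  have "finite (channels n)"
    by (rule finite_subset[of _ "{..<n} \<times> {..<n}"]) (auto simp: channels_def)
  moreover have "(\<Union>k\<in>?K. ?B k) \<subseteq> channels n"
    using assms by (auto simp: channels_def)
  moreover have "depends_only_on (no_two_hop_path n j) (\<Union>k\<in>?K. ?B k)"
    by (auto simp: depends_only_on_def no_two_hop_path_def)
  ultimately have "measure_pmf.prob (timeliness_dist p n) (no_two_hop_path n j) =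
      measure_pmf.prob (?D (\<Union>k\<in>?K. ?B k)) {t. \<forall>k\<in>?K. t \<in> ?E k}"
    unfolding timeliness_dist_def event by (rule measure_Pi_pmf_subset_event)
  also have "\<dots> = (\<Prod>k\<in>?K. measure_pmf.prob (?D (?B k)) (?E k))"
    by (rule measure_Pi_pmf_disjoint_blocks)
       (auto simp: disjoint_family_on_def depends_only_on_def)
  also have "\<dots> = (\<Prod>k\<in>?K. 1 - p\<^sup>2)"
    using assms by (intro prod.cong refl measure_Pi_pmf_bernoulli_not_both) auto
  also have "\<dots> = (1 - p\<^sup>2) ^ (n - 2)"
    using assms by (simp add: numeral_2_eq_2)
  finally show ?thesis .
qed

lemma not_leader_exists_subset_no_two_hop_path:
  assumes "0 < n"
  shows "{t. \<not> leader_exists n t} \<subseteq> (\<Union>j\<in>{1..<n}. no_two_hop_path n j)"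
proof
  fix t assume "t \<in> {t. \<not> leader_exists n t}"
  then obtain j where j: "j < n" "j \<noteq> 0" "(0, j) \<notin> (timely_channels n t)\<^sup>+"
    using assms unfolding leader_exists_def by auto
  have "\<not> (t (0, k) \<and> t (k, j))" if "k \<in> {1..<n} - {j}" for k
  proof
    assume "t (0, k) \<and> t (k, j)"
    then have "(0, k) \<in> timely_channels n t" "(k, j) \<in> timely_channels n t"
      using that j by (auto simp: timely_channels_def channels_def)
    with j show False by (meson trancl.r_into_trancl trancl_into_trancl)
  qed
  with j show "t \<in> (\<Union>j\<in>{1..<n}. no_two_hop_path n j)"
    unfolding no_two_hop_path_def by (intro UN_I[of j]) auto
qed

lemma prob_not_leader_exists_le:
  assumes "0 \<le> p" "p \<le> 1" "0 < n"
  shows "1 - measure_pmf.prob (timeliness_dist p n) {t. leader_exists n t} \<le>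
         real (n - 1) * (1 - p\<^sup>2) ^ (n - 2)"
proof -
  let ?M = "timeliness_dist p n"
  have "1 - measure_pmf.prob ?M {t. leader_exists n t} = measure_pmf.prob ?M {t. \<not> leader_exists n t}"
    using measure_pmf.prob_compl[of "{t. leader_exists n t}" ?M]
    by (simp add: Compl_eq_Diff_UNIV[symmetric] Collect_neg_eq[symmetric])
  also have "\<dots> \<le> measure_pmf.prob ?M (\<Union>j\<in>{1..<n}. no_two_hop_path n j)"
    using assms(3) by (intro measure_pmf.finite_measure_mono not_leader_exists_subset_no_two_hop_path) auto
  also have "\<dots> \<le> (\<Sum>j\<in>{1..<n}. measure_pmf.prob ?M (no_two_hop_path n j))"
    by (rule measure_pmf.finite_measure_subadditive_finite) auto
  also have "\<dots> = real (n - 1) * (1 - p\<^sup>2) ^ (n - 2)"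
    using assms by (simp add: prob_no_two_hop_path)
  finally show ?thesis .
qed

lemma real_mult_power_le:
  fixes c :: real
  assumes "0 < c" "c < 1"
  shows "real n * c ^ n \<le> c / (1 - c)"
proof -
  define d where "d = (1 - c) / c"
  have "0 < d" using assms by (simp add: d_def)
  have "1 + real n * d \<le> (1 + d) ^ n"
    using \<open>0 < d\<close> by (intro Bernoulli_inequality) simp
  also have "(1 + d) ^ n * c ^ n = 1"
    using assms by (simp add: d_def field_simps flip: power_mult_distrib)
  ultimately have "real n * d * c ^ n \<le> 1"
    using assms by (smt (verit) mult_right_mono zero_le_power)
  then show ?thesis
    using assms by (simp add: d_def field_simps)
qed

lemma real_mult_power_shift_le:
  fixes q :: real
  assumes "0 < q" "q < 1"
  shows "real (n - 1) * q ^ (n - 2) \<le> sqrt q / ((1 - sqrt q) * q\<^sup>2) * sqrt q ^ n"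
proof (cases "n < 2")
  case True
  then have "real (n - 1) = 0" by auto
  then show ?thesis using assms by simp
next
  case False
  let ?c = "sqrt q"
  have c: "0 < ?c" "?c < 1" using assms by auto
  have "q ^ n = q ^ (n - 2) * q\<^sup>2"
    using False by (metis le_add_diff_inverse2 not_less power_add)
  then have "real (n - 1) * q ^ (n - 2) \<le> real n * q ^ n / q\<^sup>2"
    using assms by (simp add: mult_right_mono)
  also have "\<dots> = (real n * ?c ^ n) * ?c ^ n / q\<^sup>2"
    using assms by (simp flip: power_mult_distrib)
  also have "\<dots> \<le> ?c / (1 - ?c) * ?c ^ n / q\<^sup>2"
    using c by (intro divide_right_mono mult_right_mono real_mult_power_le) auto
  finally show ?thesis by simp
qed

theorem theorem2:
  fixes p :: real
  assumes "0 < p" and "p < 1"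
  shows "\<exists>C c. 0 < c \<and> c < 1 \<and>
           (\<forall>n. 1 - measure_pmf.prob (timeliness_dist p n) {t. leader_exists n t} \<le> C * c ^ n)"
proof -
  define q where "q = 1 - p\<^sup>2"
  have q: "0 < q" "q < 1" unfolding q_def using assms by (auto simp: power_less_one_iff)
  define C where "C = max 1 (sqrt q / ((1 - sqrt q) * q\<^sup>2))"
  have "1 - measure_pmf.prob (timeliness_dist p n) {t. leader_exists n t} \<le> C * sqrt q ^ n" for n
  proof (cases "n = 0")
    case True
    \<comment> \<open>an empty network has no leader, so the failure probability is 1\<close>
    then show ?thesis by (simp add: C_def leader_exists_def)
  next
    case False
    then have "1 - measure_pmf.prob (timeliness_dist p n) {t. leader_exists n t} \<le> real (n - 1) * q ^ (n - 2)"
      using assms unfolding q_def by (intro prob_not_leader_exists_le) auto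
    also have "\<dots> \<le> sqrt q / ((1 - sqrt q) * q\<^sup>2) * sqrt q ^ n"
      using q by (rule real_mult_power_shift_le)
    also have "\<dots> \<le> C * sqrt q ^ n"
      unfolding C_def using q by (intro mult_right_mono) auto
    finally show ?thesis .
  qed
  moreover have "0 < sqrt q" "sqrt q < 1" using q by auto
  ultimately show ?thesis by blast
qed

end
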